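(* Let $(a^t)_{t\ge0}$ be a fixed sequence of numbers in $[0,1]$, and let $(R_t)_{t\ge0}$ be a sequence of non-negative integer-valued random variables such that: $R_0=0$; if $R_t\le 5$ then $R_{t+1}\le 6$ (otherwise arbitrary); and if $R_t\ge 6$, then, conditionally on the history up to time $t$, $R_{t+1}=R_t+1$ with probability $\frac35 a^t$, $R_{t+1}=R_t-4$ with probability $\frac25 a^t$, and $R_{t+1}=R_t-2$ with probability $1-a^t$. Then for all $i\ge 6$ and $t\ge0$, \[ \Pr[R_t=i]\le\Big(\frac23\Big)^{i-6}. \] *)

theory Defs
  imports "HOL-Probability.Probability"
begin

definition hist_event :: "'a measure \<Rightarrow> (nat \<Rightarrow> 'a \<Rightarrow> nat) \<Rightarrow> nat list \<Rightarrow> 'a set" where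
  "hist_event M R h = {\<omega> \<in> space M. \<forall>s<length h. R s \<omega> = h ! s}"

end

theory Submission
  imports Defs
begin

(* For i >= 7 the state i can only be entered from i - 1, i + 2 or i + 4, all of them >= 6,
   since from a state <= 5 the walk moves to a state <= 6. Averaging the history-conditional
   transition law over all histories that end in a state j >= 6 turns it into an unconditional
   one-step law, whence
     P[R (t+1) = i] = 3/5 a t P[R t = i-1] + (1 - a t) P[R t = i+2] + 2/5 a t P[R t = i+4].
   With the bound (2/3)^(j-6) at time t the right-hand side is at most
   (2/3)^(i-7) (3/5 a t + (1 - a t) (2/3)^3 + 2/5 a t (2/3)^5) <= (2/3)^(i-6),
   so the claim follows by induction on t; for i = 6 it is trivial. *)

lemma ex_hist_event_iff:
  assumes "x \<in> space M"
  shows "(\<exists>h. length h = Suc t \<and> h ! t = j \<and> x \<in> hist_event M R h) \<longleftrightarrow> R t x = j"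
proof
  assume "R t x = j"
  then show "\<exists>h. length h = Suc t \<and> h ! t = j \<and> x \<in> hist_event M R h"
    using assms by (intro exI[of _ "map (\<lambda>s. R s x) [0..<Suc t]"])
      (simp del: upt_Suc add: hist_event_def)
qed (auto simp: hist_event_def)

lemma hist_event_unique:
  assumes "x \<in> hist_event M R h" "x \<in> hist_event M R h'" "length h = length h'"
  shows "h = h'"
  using assms by (auto simp: hist_event_def intro: nth_equalityI)

context prob_space begin

lemma prob_transition_from_hist_event:
  assumes [measurable]: "\<And>t. R t \<in> measurable M (count_space UNIV)" "Measurable.pred M Q"
    and "0 \<le> c"
    and hist: "\<And>h. length h = Suc t \<Longrightarrow> h ! t = j \<Longrightarrow>
      prob (hist_event M R h \<inter> {x. Q x}) = c * prob (hist_event M R h)"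
  shows "\<P>(x in M. R t x = j \<and> Q x) = c * \<P>(x in M. R t x = j)"
proof -
  define H where "H = {h. length h = Suc t \<and> h ! t = j}"
  have [measurable]: "hist_event M R h \<in> events" for h
    unfolding hist_event_def by measurable
  have level_set: "\<P>(x in M. R t x = j \<and> P x) = \<P>(x in M. \<exists>h\<in>H. x \<in> hist_event M R h \<and> P x)" for P
    using ex_hist_event_iff[of _ M t j R] by (auto simp: H_def intro!: arg_cong[where f=prob])
  have sum_hist: "ennreal (\<P>(x in M. R t x = j \<and> P x))
      = (\<integral>\<^sup>+h. prob (hist_event M R h \<inter> {x. P x}) \<partial>count_space H)"
    if [measurable]: "Measurable.pred M P" for P
  proof -
    have "{x \<in> space M. x \<in> hist_event M R h \<and> P x} = hist_event M R h \<inter> {x. P x}" for h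
      by (auto simp: hist_event_def)
    moreover have "AE x in M. \<forall>h\<in>H. \<forall>h'\<in>H.
        x \<in> hist_event M R h \<and> P x \<longrightarrow> x \<in> hist_event M R h' \<and> P x \<longrightarrow> h = h'"
      by (intro always_eventually) (auto simp: H_def intro: hist_event_unique)
    then have "\<P>(x in M. \<exists>h\<in>H. x \<in> hist_event M R h \<and> P x)
        = (\<integral>\<^sup>+h. \<P>(x in M. x \<in> hist_event M R h \<and> P x) \<partial>count_space H)"
      by (intro prob_EX_countable) (simp_all add: H_def)
    ultimately show ?thesis
      unfolding level_set by simp
  qed
  have "ennreal (\<P>(x in M. R t x = j \<and> Q x))
      = (\<integral>\<^sup>+h. ennreal c * prob (hist_event M R h) \<partial>count_space H)"
    unfolding sum_hist[OF assms(2)]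
    using hist \<open>0 \<le> c\<close> by (intro nn_integral_cong) (simp add: H_def ennreal_mult)
  also have "\<dots> = ennreal c * (\<integral>\<^sup>+h. prob (hist_event M R h) \<partial>count_space H)"
    by (rule nn_integral_cmult) simp
  also have "\<dots> = ennreal (c * \<P>(x in M. R t x = j))"
    using sum_hist[of "\<lambda>_. True"] \<open>0 \<le> c\<close> by (simp add: ennreal_mult)
  finally show ?thesis
    using \<open>0 \<le> c\<close> by simp
qed

lemma AE_imp_if_prob_conj_eq:
  assumes [measurable]: "Measurable.pred M P" "Measurable.pred M Q"
    and "\<P>(x in M. P x \<and> Q x) = \<P>(x in M. P x)"
  shows "AE x in M. P x \<longrightarrow> Q x"
proof -
  have "{x \<in> space M. P x \<and> \<not> Q x} = {x \<in> space M. P x} - {x \<in> space M. P x \<and> Q x}"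
    by blast
  then have "\<P>(x in M. P x \<and> \<not> Q x) = 0"
    using assms(3) by (simp add: finite_measure_Diff subset_eq)
  then show ?thesis
    by (subst (asm) prob_Collect_eq_0) auto
qed

end

lemma drift_weights_le:
  fixes a :: real
  assumes "0 \<le> a" "a \<le> 1"
  shows "3/5 * a + (1 - a) * (2/3)^3 + 2/5 * a * (2/3)^5 \<le> 2/3"
  using assms by (simp add: field_simps power_divide)

locale drifting_walk = prob_space M for M :: "'a measure" +
  fixes R :: "nat \<Rightarrow> 'a \<Rightarrow> nat" and a :: "nat \<Rightarrow> real"
  assumes R_measurable [measurable]: "\<And>t. R t \<in> measurable M (count_space UNIV)"
    and a_bounds: "\<And>t. 0 \<le> a t \<and> a t \<le> 1"
    and AE_start: "AE \<omega> in M. R 0 \<omega> = 0"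
    and AE_low_step: "\<And>t. AE \<omega> in M. R t \<omega> \<le> 5 \<longrightarrow> R (Suc t) \<omega> \<le> 6"
    and hist_step_up: "\<And>t h. length h = Suc t \<Longrightarrow> h ! t \<ge> 6 \<Longrightarrow>
           measure M (hist_event M R h \<inter> {\<omega>. R (Suc t) \<omega> = h ! t + 1})
             = 3/5 * a t * measure M (hist_event M R h)"
    and hist_step_down4: "\<And>t h. length h = Suc t \<Longrightarrow> h ! t \<ge> 6 \<Longrightarrow>
           measure M (hist_event M R h \<inter> {\<omega>. R (Suc t) \<omega> = h ! t - 4})
             = 2/5 * a t * measure M (hist_event M R h)"
    and hist_step_down2: "\<And>t h. length h = Suc t \<Longrightarrow> h ! t \<ge> 6 \<Longrightarrow>
           measure M (hist_event M R h \<inter> {\<omega>. R (Suc t) \<omega> = h ! t - 2})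
             = (1 - a t) * measure M (hist_event M R h)"
begin

lemma prob_step_up:
  "6 \<le> j \<Longrightarrow> \<P>(\<omega> in M. R t \<omega> = j \<and> R (Suc t) \<omega> = j + 1) = 3/5 * a t * \<P>(\<omega> in M. R t \<omega> = j)"
  by (rule prob_transition_from_hist_event) (use a_bounds hist_step_up in auto)

lemma prob_step_down4:
  "6 \<le> j \<Longrightarrow> \<P>(\<omega> in M. R t \<omega> = j \<and> R (Suc t) \<omega> = j - 4) = 2/5 * a t * \<P>(\<omega> in M. R t \<omega> = j)"
  by (rule prob_transition_from_hist_event) (use a_bounds hist_step_down4 in auto)

lemma prob_step_down2:
  "6 \<le> j \<Longrightarrow> \<P>(\<omega> in M. R t \<omega> = j \<and> R (Suc t) \<omega> = j - 2) = (1 - a t) * \<P>(\<omega> in M. R t \<omega> = j)"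
  by (rule prob_transition_from_hist_event) (use a_bounds hist_step_down2 in auto)

lemma AE_step_from_high:
  "AE \<omega> in M. 6 \<le> R t \<omega> \<longrightarrow> R (Suc t) \<omega> \<in> {R t \<omega> + 1, R t \<omega> - 4, R t \<omega> - 2}"
proof -
  have step_from: "AE \<omega> in M. R t \<omega> = j \<longrightarrow> R (Suc t) \<omega> \<in> {j + 1, j - 4, j - 2}" if "6 \<le> j" for j
  proof (rule AE_imp_if_prob_conj_eq)
    \<comment> \<open>the three prescribed moves already carry the full mass of \<open>R t = j\<close>\<close>
    have "\<P>(\<omega> in M. R t \<omega> = j \<and> R (Suc t) \<omega> \<in> {j + 1, j - 4, j - 2})
        = (\<Sum>k\<in>{j + 1, j - 4, j - 2}. \<P>(\<omega> in M. R t \<omega> = j \<and> R (Suc t) \<omega> = k))"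
      by (rule prob_sum) auto
    also have "\<dots> = \<P>(\<omega> in M. R t \<omega> = j \<and> R (Suc t) \<omega> = j + 1)
        + \<P>(\<omega> in M. R t \<omega> = j \<and> R (Suc t) \<omega> = j - 4) + \<P>(\<omega> in M. R t \<omega> = j \<and> R (Suc t) \<omega> = j - 2)"
      using that by (subst sum.insert) (auto simp: add.assoc)
    also have "\<dots> = \<P>(\<omega> in M. R t \<omega> = j)"
      using that by (simp only: prob_step_up prob_step_down4 prob_step_down2) (simp add: algebra_simps)
    finally show "\<P>(\<omega> in M. R t \<omega> = j \<and> R (Suc t) \<omega> \<in> {j + 1, j - 4, j - 2}) = \<P>(\<omega> in M. R t \<omega> = j)" .
  qed auto
  have "AE \<omega> in M. \<forall>j. 6 \<le> j \<longrightarrow> R t \<omega> = j \<longrightarrow> R (Suc t) \<omega> \<in> {j + 1, j - 4, j - 2}"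
    unfolding AE_all_countable
  proof
    fix j
    show "AE \<omega> in M. 6 \<le> j \<longrightarrow> R t \<omega> = j \<longrightarrow> R (Suc t) \<omega> \<in> {j + 1, j - 4, j - 2}"
      using step_from[of j] by (cases "6 \<le> j") simp_all
  qed
  then show ?thesis
    by eventually_elim auto
qed

lemma prob_level_step:
  assumes "7 \<le> i"
  shows "\<P>(\<omega> in M. R (Suc t) \<omega> = i) = 3/5 * a t * \<P>(\<omega> in M. R t \<omega> = i - 1)
    + (1 - a t) * \<P>(\<omega> in M. R t \<omega> = i + 2) + 2/5 * a t * \<P>(\<omega> in M. R t \<omega> = i + 4)"
proof -
  have "6 \<le> i - 1"
    using assms by simp
  have predecessors: "AE \<omega> in M. R (Suc t) \<omega> = i \<longrightarrow> R t \<omega> \<in> {i - 1, i + 2, i + 4}"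
    using AE_step_from_high[of t] AE_low_step[of t]
    by eventually_elim (use assms in auto)
  then have "\<P>(\<omega> in M. R (Suc t) \<omega> = i)
      = (\<Sum>j\<in>{i - 1, i + 2, i + 4}. \<P>(\<omega> in M. R t \<omega> = j \<and> R (Suc t) \<omega> = i))"
    by (intro prob_sum) (auto elim!: eventually_mono)
  also have "\<dots> = 3/5 * a t * \<P>(\<omega> in M. R t \<omega> = i - 1)
    + (1 - a t) * \<P>(\<omega> in M. R t \<omega> = i + 2) + 2/5 * a t * \<P>(\<omega> in M. R t \<omega> = i + 4)"
    using assms prob_step_up[OF \<open>6 \<le> i - 1\<close>, of t] prob_step_down2[of "i + 2" t] prob_step_down4[of "i + 4" t]
    by (subst sum.insert) (auto simp: add.assoc)
  finally show ?thesis .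
qed

lemma prob_level_le: "6 \<le> i \<Longrightarrow> \<P>(\<omega> in M. R t \<omega> = i) \<le> (2/3) ^ (i - 6)"
proof (induction t arbitrary: i)
  case 0
  have "AE \<omega> in M. \<not> R 0 \<omega> = i"
    using AE_start by eventually_elim (use 0 in auto)
  then show ?case
    by (simp add: prob_eq_0_AE)
next
  case (Suc t)
  show ?case
  proof (cases "i = 6")
    case False
    then have "7 \<le> i"
      using Suc.prems by simp
    define q :: real where "q = (2/3) ^ (i - 7)"
    have exponents: "i - 1 - 6 = i - 7" "i + 2 - 6 = i - 7 + 3" "i + 4 - 6 = i - 7 + 5" "i - 6 = i - 7 + 1"
      using \<open>7 \<le> i\<close> by auto
    have IH: "\<P>(\<omega> in M. R t \<omega> = i - 1) \<le> q" "\<P>(\<omega> in M. R t \<omega> = i + 2) \<le> q * (2/3)^3"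
      "\<P>(\<omega> in M. R t \<omega> = i + 4) \<le> q * (2/3)^5"
      using Suc.IH[of "i - 1"] Suc.IH[of "i + 2"] Suc.IH[of "i + 4"] \<open>7 \<le> i\<close>
      by (simp_all only: exponents q_def power_add)
    have "\<P>(\<omega> in M. R (Suc t) \<omega> = i) \<le> 3/5 * a t * q + (1 - a t) * (q * (2/3)^3) + 2/5 * a t * (q * (2/3)^5)"
      unfolding prob_level_step[OF \<open>7 \<le> i\<close>] using a_bounds[of t] IH
      by (intro add_mono mult_left_mono) auto
    also have "\<dots> = q * (3/5 * a t + (1 - a t) * (2/3)^3 + 2/5 * a t * (2/3)^5)"
      by (simp add: algebra_simps)
    also have "\<dots> \<le> q * (2/3)"
      using drift_weights_le a_bounds by (intro mult_left_mono) (auto simp: q_def)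
    also have "\<dots> = (2/3) ^ (i - 6)"
      by (simp add: exponents q_def)
    finally show ?thesis .
  qed simp
qed

end

theorem lemma5:
  fixes M :: "'a measure" and R :: "nat \<Rightarrow> 'a \<Rightarrow> nat" and a :: "nat \<Rightarrow> real"
  assumes "prob_space M"
    and "\<And>t. R t \<in> measurable M (count_space UNIV)"
    and "\<And>t. 0 \<le> a t \<and> a t \<le> 1"
    and "AE \<omega> in M. R 0 \<omega> = 0"
    and "\<And>t. AE \<omega> in M. R t \<omega> \<le> 5 \<longrightarrow> R (Suc t) \<omega> \<le> 6"
    and "\<And>t h. length h = Suc t \<Longrightarrow> h ! t \<ge> 6 \<Longrightarrow>
           measure M (hist_event M R h \<inter> {\<omega>. R (Suc t) \<omega> = h ! t + 1})
             = 3/5 * a t * measure M (hist_event M R h)"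
    and "\<And>t h. length h = Suc t \<Longrightarrow> h ! t \<ge> 6 \<Longrightarrow>
           measure M (hist_event M R h \<inter> {\<omega>. R (Suc t) \<omega> = h ! t - 4})
             = 2/5 * a t * measure M (hist_event M R h)"
    and "\<And>t h. length h = Suc t \<Longrightarrow> h ! t \<ge> 6 \<Longrightarrow>
           measure M (hist_event M R h \<inter> {\<omega>. R (Suc t) \<omega> = h ! t - 2})
             = (1 - a t) * measure M (hist_event M R h)"
  shows "\<forall>i\<ge>6. \<forall>t. measure M {\<omega> \<in> space M. R t \<omega> = i} \<le> (2/3) ^ (i - 6)"
proof -
  interpret drifting_walk M R a
    using assms by (intro drifting_walk.intro drifting_walk_axioms.intro)
  show ?thesis
    using prob_level_le by blast
qed

end
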